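(* Let $Z'$ be a Markov chain with transition matrix $\mathbf P_{Z'}$ on a finite state space $\mathbb E'=\{-\infty\}\cup\mathbb E$, $\mathbb E=\{\mathbf e_1,\ldots,\mathbf e_M\}$, having two absorbing states $-\infty$ and $\mathbf e_M$. Let $\mathbf P_Z$ be the substochastic $M\times M$ matrix obtained from $\mathbf P_{Z'}$ by deleting the row and column of $-\infty$. Fix a partial order $\preceq$ on $\mathbb E$ in which $\mathbf e_M$ is the unique maximal element, let $\mathbf C(\mathbf e,\mathbf e')=\mathbf 1(\mathbf e\preceq\mathbf e')$, and define $\mathbf P_X=\mathbf C\,\mathbf P_Z^T\,\mathbf C^{-1}$. Then every row of $\mathbf P_X$ sums to $1$, i.e. $\sum_{\mathbf e_2\in\mathbb E}\mathbf P_X(\mathbf e,\mathbf e_2)=1$ for all $\mathbf e\in\mathbb E$. Moreover, if there exists $\pi:\mathbb E\to\mathbb R$ with $\sum_{\mathbf e\in\mathbb E}\pi(\mathbf e)=1$ and $\lim_{n\to\infty}\mathbf P_X^n(\mathbf e_2,\mathbf e)=\pi(\mathbf e)$ for all $\mathbf e,\mathbf e_2\in\mathbb E$, then for every $\mathbf e'\in\mathbb E$, $$P(\tau_{\mathbf e_M}<\tau_{-\infty}\mid Z'_0=\mathbf e')=\pi(\{\mathbf e'\}^{\downarrow}),$$ where $\tau_{\mathbf e}=\inf\{n\ge0:Z'_n=\mathbf e\}$.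
   Context: $\mathbf C$ is invertible (it is triangular w.r.t. a linear extension with unit diagonal); its inverse is the Möbius function $\mu$ of the order. For $A\subseteq\mathbb E$, $\pi(A)=\sum_{\mathbf e\in A}\pi(\mathbf e)$, and $\{\mathbf e\}^{\downarrow}=\{\mathbf e'\in\mathbb E:\mathbf e'\preceq\mathbf e\}$. The matrix $\mathbf P_X$ may have negative entries; no nonnegativity is assumed. *)

theory Defs
  imports "HOL-Analysis.Analysis"
begin

definition matpow :: "real ^ 'n ^ 'n \<Rightarrow> nat \<Rightarrow> real ^ 'n ^ 'n" where
  "matpow A n = (((**) A) ^^ n) (mat 1)"

definition stochastic :: "('s::finite \<Rightarrow> 's \<Rightarrow> real) \<Rightarrow> bool" where
  "stochastic P \<longleftrightarrow> (\<forall>x y. 0 \<le> P x y) \<and> (\<forall>x. (\<Sum>y\<in>UNIV. P x y) = 1)"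

text \<open>For a Markov chain with transition matrix P,
  first_hit P a b n x = P(tau_a = n and tau_b > n | Z_0 = x),
  where tau_s = inf{n >= 0 : Z_n = s}.\<close>
fun first_hit :: "('s::finite \<Rightarrow> 's \<Rightarrow> real) \<Rightarrow> 's \<Rightarrow> 's \<Rightarrow> nat \<Rightarrow> 's \<Rightarrow> real" where
  "first_hit P a b 0 x = (if x = a then 1 else 0)"
| "first_hit P a b (Suc n) x =
     (if x = a \<or> x = b then 0 else (\<Sum>y\<in>UNIV. P x y * first_hit P a b n y))"

text \<open>hit_before P a b x = P(tau_a < tau_b | Z_0 = x), as the sum over the disjoint
  events {tau_a = n, tau_b > n}.\<close>
definition hit_before :: "('s::finite \<Rightarrow> 's \<Rightarrow> real) \<Rightarrow> 's \<Rightarrow> 's \<Rightarrow> 's \<Rightarrow> real" where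
  "hit_before P a b x = (\<Sum>n. first_hit P a b n x)"

end

theory Submission
  imports Defs
begin

text \<open>Since \<open>e\<^sub>M\<close> is absorbing and \<open>-\<infinity>\<close> is cut away, the probability of reaching \<open>e\<^sub>M\<close> from
  \<open>e'\<close> within \<open>n\<close> steps without visiting \<open>-\<infinity>\<close> is the entry \<open>P\<^sub>Z\<^sup>n(e', e\<^sub>M)\<close>. Conjugation
  by \<open>C\<close> carries \<open>P\<^sub>Z\<^sup>T\<close> to \<open>P\<^sub>X\<close> and its powers to the powers of \<open>P\<^sub>X\<close>, so
  \<open>P\<^sub>Z\<^sup>n(e', e\<^sub>M) = (C\<^sup>-\<^sup>1 P\<^sub>X\<^sup>n C)(e\<^sub>M, e')\<close>. As \<open>e\<^sub>M\<close> is the greatest element, \<open>C\<close> maps the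
  indicator of \<open>e\<^sub>M\<close> to the all-ones vector; this indicator is fixed by \<open>P\<^sub>Z\<^sup>T\<close>, hence the
  all-ones vector is fixed by \<open>P\<^sub>X\<close> and the \<open>e\<^sub>M\<close>-row of \<open>C\<^sup>-\<^sup>1\<close> sums to 1. Letting \<open>n \<rightarrow> \<infinity>\<close>
  with \<open>P\<^sub>X\<^sup>n(a, b) \<rightarrow> \<pi>(b)\<close> gives \<open>\<Sum>\<^sub>b \<pi>(b) C(b, e') = \<pi>({e'}\<^sup>\<down>)\<close>.\<close>

lemma wf_greater_finite_order: "wf {(x, e::'e::{finite,order}). e < x}"
proof (rule finite_acyclic_wf)
  show "acyclic {(x, e::'e). e < x}"
    by (rule acyclicI_order[where f = "\<lambda>x. x"]) auto
qed simp

lemma greater_induct_finite_order [case_names greater]: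
  fixes e :: "'e::{finite,order}"
  assumes "\<And>e. (\<And>x. e < x \<Longrightarrow> P x) \<Longrightarrow> P e"
  shows "P e"
  by (rule wf_induct[OF wf_greater_finite_order]) (use assms in blast)

lemma unique_maximal_imp_greatest:
  fixes eM :: "'e::{finite,order}"
  assumes "\<forall>y. (\<forall>x. \<not> y < x) \<longrightarrow> y = eM"
  shows "e \<le> eM"
proof -
  obtain m where "e \<le> m" and m_max: "\<forall>x. m \<le> x \<longrightarrow> m = x"
    using finite_has_maximal2[of UNIV e] by auto
  then have "m = eM"
    using assms by (metis less_le)
  with \<open>e \<le> m\<close> show ?thesis by simp
qed

lemma invertible_matrix_inv:
  fixes A :: "'a::field ^ 'n ^ 'n"
  assumes "invertible A"
  shows "A ** matrix_inv A = mat 1" and "matrix_inv A ** A = mat 1"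
proof -
  have "\<exists>A'. A ** A' = mat 1 \<and> A' ** A = mat 1"
    using assms by (simp add: invertible_def)
  then have "A ** matrix_inv A = mat 1 \<and> matrix_inv A ** A = mat 1"
    unfolding matrix_inv_def by (rule someI_ex)
  then show "A ** matrix_inv A = mat 1" and "matrix_inv A ** A = mat 1"
    by auto
qed

definition zeta_matrix :: "'a::field ^ ('e::{finite,order}) ^ ('e::{finite,order})" where
  "zeta_matrix = (\<chi> e e2. if e \<le> e2 then 1 else 0)"

lemma zeta_matrix_mult_vector:
  "(zeta_matrix *v v) $ e = (\<Sum>e2\<in>{e2. e \<le> e2}. v $ e2)"
  by (simp add: zeta_matrix_def matrix_vector_mult_def sum.If_cases Collect_conv_if
      if_distrib[of "\<lambda>c. c * _"] cong: if_cong)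

lemma zeta_matrix_mult_vector_eq_0:
  fixes v :: "'a::field ^ ('e::{finite,order})"
  assumes "zeta_matrix *v v = 0"
  shows "v = 0"
proof -
  have "v $ e = 0" for e
  proof (induction e rule: greater_induct_finite_order)
    case (greater e)
    have "{e2. e \<le> e2} = insert e {e2. e < e2}"
      by auto
    then have "0 = v $ e + (\<Sum>e2\<in>{e2. e < e2}. v $ e2)"
      using zeta_matrix_mult_vector[of v e] assms by simp
    also have "(\<Sum>e2\<in>{e2. e < e2}. v $ e2) = 0"
      using greater by simp
    finally show ?case by simp
  qed
  then show ?thesis by (simp add: vec_eq_iff)
qed

lemma invertible_zeta_matrix: "invertible (zeta_matrix :: 'a::field ^ ('e::{finite,order}) ^ ('e::{finite,order}))"
proof -
  have "inj ((*v) (zeta_matrix :: 'a ^ ('e::{finite,order}) ^ ('e::{finite,order})))"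
    by (rule injI) (metis zeta_matrix_mult_vector_eq_0 matrix_vector_mult_diff_distrib right_minus_eq)
  then show ?thesis
    using invertible_left_inverse matrix_left_invertible_injective by blast
qed

lemma zeta_matrix_mult_axis_greatest:
  assumes "\<And>e. e \<le> eM"
  shows "zeta_matrix *v axis eM 1 = (\<chi> e. (1::'a::field))"
  by (simp add: vec_eq_iff zeta_matrix_mult_vector axis_def assms sum.If_cases)

lemma matpow_Suc: "matpow A (Suc n) = A ** matpow A n"
  by (simp add: matpow_def)

lemma matpow_Suc_right: "matpow A (Suc n) = matpow A n ** A"
  by (induction n) (simp_all add: matpow_Suc matpow_def[of _ 0] matrix_mul_assoc)

lemma transpose_matpow: "transpose (matpow A n) = matpow (transpose A) n"
proof (induction n)
  case 0
  show ?case by (simp add: matpow_def transpose_mat)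
next
  case (Suc n)
  have "transpose (matpow A (Suc n)) = transpose A ** transpose (matpow A n)"
    by (simp add: matpow_Suc_right matrix_transpose_mul)
  then show ?case
    by (simp add: Suc matpow_Suc)
qed

lemma matpow_conjugate:
  assumes "B ** B' = mat 1" and "B' ** B = mat 1"
  shows "matpow (B ** A ** B') n = B ** matpow A n ** B'"
proof (induction n)
  case 0
  show ?case by (simp add: matpow_def assms(1))
next
  case (Suc n)
  have "matpow (B ** A ** B') (Suc n) = B ** A ** (B' ** B) ** matpow A n ** B'"
    by (simp add: matpow_Suc Suc matrix_mul_assoc)
  then show ?case
    by (simp add: assms(2) matpow_Suc matrix_mul_assoc)
qed

lemma matpow_absorbing_row:
  fixes A :: "real ^ 'n ^ 'n"
  assumes "A $ a = axis a 1"
  shows "matpow A n $ a = axis a 1"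
proof (induction n)
  case 0
  show ?case by (simp add: matpow_def mat_def axis_def vec_eq_iff)
next
  case (Suc n)
  have "matpow A (Suc n) $ a = (\<chi> j. \<Sum>k\<in>UNIV. A $ a $ k * matpow A n $ k $ j)"
    by (simp add: matpow_Suc matrix_matrix_mult_def)
  also have "\<dots> = matpow A n $ a"
    using assms by (simp add: axis_def if_distrib[of "\<lambda>c. c * _"] cong: if_cong)
  finally show ?case using Suc by simp
qed

lemma transpose_mult_axis_absorbing:
  fixes A :: "real ^ 'n ^ 'n"
  assumes "A $ a = axis a 1"
  shows "transpose A *v axis a 1 = axis a 1"
  by (simp add: matrix_vector_mult_basis row_def assms)

lemma matpow_conjugate_transpose:
  fixes B Q :: "real ^ 'n ^ 'n"
  assumes "invertible B"
  shows "transpose (matpow Q n) = matrix_inv B ** matpow (B ** transpose Q ** matrix_inv B) n ** B"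
proof -
  note inv = invertible_matrix_inv[OF assms]
  have "matrix_inv B ** (B ** transpose Q ** matrix_inv B) ** B
          = (matrix_inv B ** B) ** transpose Q ** (matrix_inv B ** B)"
    by (simp add: matrix_mul_assoc)
  then have "matrix_inv B ** (B ** transpose Q ** matrix_inv B) ** B = transpose Q"
    by (simp add: inv)
  then show ?thesis
    using matpow_conjugate[OF inv(2,1), of "B ** transpose Q ** matrix_inv B" n]
    by (simp add: transpose_matpow)
qed

lemma conjugate_transpose_absorbing_mult_ones:
  fixes B Q :: "real ^ 'n ^ 'n"
  assumes "invertible B" and B_axis: "B *v axis a 1 = (\<chi> i. 1)" and "Q $ a = axis a 1"
  shows "(B ** transpose Q ** matrix_inv B) *v (\<chi> i. 1) = (\<chi> i. 1)"
proof -
  have "matrix_inv B *v (\<chi> i. 1) = axis a 1"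
    using B_axis invertible_matrix_inv(2)[OF assms(1)]
    by (metis matrix_vector_mul_assoc matrix_vector_mul_lid)
  moreover have "(B ** transpose Q ** matrix_inv B) *v (\<chi> i. 1)
                  = B *v (transpose Q *v (matrix_inv B *v (\<chi> i. 1)))"
    by (simp only: matrix_vector_mul_assoc matrix_mul_assoc)
  ultimately show ?thesis
    by (simp only: transpose_mult_axis_absorbing[OF assms(3)] B_axis)
qed

lemma matrix_inv_zeta_matrix_row_greatest:
  assumes "\<And>e. e \<le> eM"
  shows "(\<Sum>a\<in>UNIV. matrix_inv zeta_matrix $ eM $ a) = (1::real)"
proof -
  have "matrix_inv zeta_matrix *v (\<chi> e. 1) = axis eM (1::real)"
    using zeta_matrix_mult_axis_greatest[OF assms] invertible_matrix_inv(2)[OF invertible_zeta_matrix]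
    by (metis matrix_vector_mul_assoc matrix_vector_mul_lid)
  then have "(matrix_inv zeta_matrix *v (\<chi> e. 1)) $ eM = (1::real)"
    by simp
  then show ?thesis
    by (simp add: matrix_vector_mult_def)
qed

lemma tendsto_matrix_mult_rank_one:
  fixes M :: "nat \<Rightarrow> real ^ 'n ^ 'n"
  assumes "\<And>a b. (\<lambda>n. M n $ a $ b) \<longlonglongrightarrow> \<pi> b"
  shows "(\<lambda>n. (A ** M n ** B) $ i $ j) \<longlonglongrightarrow> (\<Sum>a\<in>UNIV. A $ i $ a) * (\<Sum>b\<in>UNIV. \<pi> b * B $ b $ j)"
proof -
  have "(\<lambda>n. (A ** M n ** B) $ i $ j)
          \<longlonglongrightarrow> (\<Sum>b\<in>UNIV. (\<Sum>a\<in>UNIV. A $ i $ a * \<pi> b) * B $ b $ j)"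
    unfolding matrix_matrix_mult_def vec_lambda_beta by (intro tendsto_intros assms)
  then show ?thesis
    by (simp add: sum_distrib_left sum_distrib_right mult_ac)
qed

lemma stochastic_absorbing_row:
  assumes "stochastic P" and "P a a = 1" and "y \<noteq> a"
  shows "P a y = 0"
proof -
  have nonneg: "\<forall>x y. 0 \<le> P x y" and row_sum: "(\<Sum>y\<in>UNIV. P a y) = 1"
    using assms(1) by (auto simp: stochastic_def)
  have "(\<Sum>y\<in>UNIV - {a}. P a y) = 0"
    using row_sum assms(2) by (simp add: sum.remove[of UNIV a])
  then show ?thesis
    using nonneg assms(3) by (subst (asm) sum_nonneg_eq_0_iff) auto
qed

lemma sum_first_hit_Suc:
  "(\<Sum>k\<le>Suc n. first_hit P a b k x) =
     (if x = a then 1 else if x = b then 0 else (\<Sum>y\<in>UNIV. P x y * (\<Sum>k\<le>n. first_hit P a b k y)))"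
proof -
  have "(\<Sum>k\<le>Suc n. first_hit P a b k x) = first_hit P a b 0 x + (\<Sum>k\<le>n. first_hit P a b (Suc k) x)"
    by (rule sum.atMost_Suc_shift)
  also have "\<dots> = (if x = a then 1 else if x = b then 0
                    else (\<Sum>k\<le>n. \<Sum>y\<in>UNIV. P x y * first_hit P a b k y))"
    by auto
  also have "(\<Sum>k\<le>n. \<Sum>y\<in>UNIV. P x y * first_hit P a b k y) = (\<Sum>y\<in>UNIV. P x y * (\<Sum>k\<le>n. first_hit P a b k y))"
    by (simp add: sum_distrib_left sum.swap[of _ "{..n}"])
  finally show ?thesis .
qed

lemma first_hit_avoided: "b \<noteq> a \<Longrightarrow> first_hit P a b n b = 0"
  by (cases n) simp_all

lemma sum_first_hit_eq_matpow:
  fixes P :: "'e::finite option \<Rightarrow> 'e option \<Rightarrow> real"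
  assumes stoch: "stochastic P" and absorbing: "P (Some eM) (Some eM) = 1"
    and PZ: "PZ = (\<chi> e e2. P (Some e) (Some e2))"
  shows "(\<Sum>k\<le>n. first_hit P (Some eM) None k (Some e)) = matpow PZ n $ e $ eM"
proof -
  define w where "w n x = (case x of None \<Rightarrow> 0 | Some e \<Rightarrow> matpow PZ n $ e $ eM)" for n x
  have "PZ $ eM = axis eM 1"
    using stochastic_absorbing_row[OF stoch absorbing] absorbing by (auto simp: PZ axis_def vec_eq_iff)
  then have eM_eM: "matpow PZ n $ eM $ eM = 1" for n
    by (simp add: matpow_absorbing_row axis_def)
  have "(\<Sum>k\<le>n. first_hit P (Some eM) None k x) = w n x" for x
  proof (induction n arbitrary: x)
    case 0
    show ?case by (auto simp: w_def matpow_def mat_def split: option.split)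
  next
    case (Suc n)
    show ?case
    proof (cases x)
      case None
      then show ?thesis by (simp add: first_hit_avoided w_def)
    next
      case (Some e)
      have "(\<Sum>k\<le>Suc n. first_hit P (Some eM) None k x) =
              (if e = eM then 1 else \<Sum>y\<in>UNIV. P x y * w n y)"
        by (subst sum_first_hit_Suc) (simp add: Some Suc)
      also have "\<dots> = w (Suc n) x"
      proof (cases "e = eM")
        case True
        then show ?thesis by (simp add: Some w_def eM_eM)
      next
        case False
        have "(\<Sum>y\<in>UNIV. P x y * w n y) = (\<Sum>k\<in>UNIV. PZ $ e $ k * matpow PZ n $ k $ eM)"
          by (simp add: UNIV_option_conv sum.reindex Some w_def PZ)
        then show ?thesis
          using False by (simp add: Some w_def matpow_Suc matrix_matrix_mult_def)
      qed
      finally show ?thesis .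
    qed
  qed
  then show ?thesis by (simp add: w_def)
qed

lemma hit_before_eq_lim:
  assumes "(\<lambda>n. \<Sum>k\<le>n. first_hit P a b k x) \<longlonglongrightarrow> L"
  shows "hit_before P a b x = L"
proof -
  have "(\<lambda>n. \<Sum>k<Suc n. first_hit P a b k x) \<longlonglongrightarrow> L"
    using assms by (simp add: lessThan_Suc_atMost)
  then have "(\<lambda>n. first_hit P a b n x) sums L"
    unfolding sums_def by (rule LIMSEQ_imp_Suc)
  then show ?thesis
    unfolding hit_before_def by (rule sums_unique[symmetric])
qed

theorem theorem3p1:
  fixes P' :: "'e::{finite,order} option \<Rightarrow> 'e option \<Rightarrow> real"
    and eM :: "'e"
  assumes stoch: "stochastic P'"
    and absorb_neg_inf: "P' None None = 1"
    and absorb_eM: "P' (Some eM) (Some eM) = 1"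
    and eM_maximal: "\<forall>x. \<not> eM < x"
    and eM_unique_maximal: "\<forall>y. (\<forall>x. \<not> y < x) \<longrightarrow> y = eM"
  defines "PZ \<equiv> (\<chi> e e2. P' (Some e) (Some e2)) :: real ^ ('e::{finite,order}) ^ ('e::{finite,order})"
    and "C \<equiv> (\<chi> e e2. if e \<le> e2 then 1 else 0) :: real ^ ('e::{finite,order}) ^ ('e::{finite,order})"
  defines "PX \<equiv> C ** transpose PZ ** matrix_inv C"
  shows "(\<forall>e. (\<Sum>e2\<in>UNIV. PX $ e $ e2) = 1) \<and>
         (\<forall>\<pi> :: ('e::{finite,order}) \<Rightarrow> real.
            (\<Sum>e\<in>UNIV. \<pi> e) = 1 \<longrightarrow>
            (\<forall>e e2. (\<lambda>n. matpow PX n $ e2 $ e) \<longlonglongrightarrow> \<pi> e) \<longrightarrow>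
            (\<forall>e'. hit_before P' (Some eM) None (Some e') = (\<Sum>e\<in>{e. e \<le> e'}. \<pi> e)))"
proof -
  have C: "C = zeta_matrix"
    by (simp add: C_def zeta_matrix_def)
  have greatest: "\<And>e. e \<le> eM"
    using unique_maximal_imp_greatest[OF eM_unique_maximal] .
  have "PZ $ eM = axis eM 1"
    using stochastic_absorbing_row[OF stoch absorb_eM] absorb_eM
    by (auto simp: PZ_def axis_def vec_eq_iff)
  then have "PX *v (\<chi> e. 1) = (\<chi> e. 1)"
    unfolding PX_def C
    by (rule conjugate_transpose_absorbing_mult_ones[OF invertible_zeta_matrix
          zeta_matrix_mult_axis_greatest[OF greatest]])
  then have row_sums: "\<forall>e. (\<Sum>e2\<in>UNIV. PX $ e $ e2) = 1"
    by (simp add: vec_eq_iff matrix_vector_mult_def)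
  have PZ_pow: "transpose (matpow PZ n) = matrix_inv C ** matpow PX n ** C" for n
    unfolding PX_def C by (rule matpow_conjugate_transpose[OF invertible_zeta_matrix])
  have "hit_before P' (Some eM) None (Some e') = (\<Sum>e\<in>{e. e \<le> e'}. \<pi> e)"
    if lim: "\<forall>e e2. (\<lambda>n. matpow PX n $ e2 $ e) \<longlonglongrightarrow> \<pi> e" for \<pi> e'
  proof (rule hit_before_eq_lim)
    have "(\<lambda>n. (matrix_inv C ** matpow PX n ** C) $ eM $ e') \<longlonglongrightarrow> (\<Sum>b\<in>UNIV. \<pi> b * C $ b $ e')"
      using tendsto_matrix_mult_rank_one[of "matpow PX" \<pi> "matrix_inv C" C eM e'] lim
      by (simp add: C matrix_inv_zeta_matrix_row_greatest[OF greatest])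
    also have "(\<Sum>b\<in>UNIV. \<pi> b * C $ b $ e') = (\<Sum>e\<in>{e. e \<le> e'}. \<pi> e)"
      by (simp add: C_def sum.If_cases Collect_conv_if if_distrib[of "\<lambda>c. _ * c"] cong: if_cong)
    finally show "(\<lambda>n. \<Sum>k\<le>n. first_hit P' (Some eM) None k (Some e')) \<longlonglongrightarrow> (\<Sum>e\<in>{e. e \<le> e'}. \<pi> e)"
      using sum_first_hit_eq_matpow[OF stoch absorb_eM PZ_def[THEN meta_eq_to_obj_eq]]
      by (simp add: PZ_pow[symmetric] transpose_def)
  qed
  with row_sums show ?thesis by blast
qed

end
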